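(* Let $H$ be a hypergroup with hyperoperation $*$ and let $\equiv$ be a congruence relation on $H$. Let $H/\equiv=\{[a]:a\in H\}$ be the set of equivalence classes, with hyperoperation $[x]\boxdot[y]=\{[z]: z\in x'*y' \text{ for some } x',y'\in H \text{ with } [x']=[x],[y']=[y]\}$. Then $(H/\equiv,\boxdot)$ is a hypergroup.
   Context: A hypergroup is a nonempty set $H$ with $*:H\times H\to P^*(H)$ (nonempty subsets), extended to subsets by unions, which is associative, has a unique identity $e$ ($e*x=x*e=\{x\}$), unique inverses $h^{-1}$ with $e\in(h^{-1}*h)\cap(h*h^{-1})$, and is reversible ($c\in a*b\Rightarrow a\in c*b^{-1},\ b\in a^{-1}*c$). For an equivalence relation $\equiv$ on $H$ and subsets $A,B\subseteq H$, write $A\equiv B$ if for every $a\in A$ and $b\in B$ there exist $b'\in A$ and $a'\in B$ with $a\equiv a'$ and $b\equiv b'$. A congruence relation on $H$ is an equivalence relation $\equiv$ such that (i) if $a\equiv x$ and $b\equiv y$ then $a*b\equiv x*y$ and $b*a\equiv y*x$; (ii) if $a\equiv b$ then $a^{-1}\equiv b^{-1}$. *)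

theory Defs
  imports Main
begin

definition hyperext :: "('a \<Rightarrow> 'a \<Rightarrow> 'a set) \<Rightarrow> 'a set \<Rightarrow> 'a set \<Rightarrow> 'a set" where
  "hyperext f A B = (\<Union>a\<in>A. \<Union>b\<in>B. f a b)"

definition hg_ident :: "'a set \<Rightarrow> ('a \<Rightarrow> 'a \<Rightarrow> 'a set) \<Rightarrow> 'a \<Rightarrow> bool" where
  "hg_ident H f e \<longleftrightarrow> e \<in> H \<and> (\<forall>x\<in>H. f e x = {x} \<and> f x e = {x})"

definition hident :: "'a set \<Rightarrow> ('a \<Rightarrow> 'a \<Rightarrow> 'a set) \<Rightarrow> 'a" where
  "hident H f = (THE e. hg_ident H f e)"

definition hg_inv :: "'a set \<Rightarrow> ('a \<Rightarrow> 'a \<Rightarrow> 'a set) \<Rightarrow> 'a \<Rightarrow> 'a \<Rightarrow> 'a \<Rightarrow> bool" where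
  "hg_inv H f e h h' \<longleftrightarrow> h' \<in> H \<and> e \<in> f h' h \<and> e \<in> f h h'"

definition hinv :: "'a set \<Rightarrow> ('a \<Rightarrow> 'a \<Rightarrow> 'a set) \<Rightarrow> 'a \<Rightarrow> 'a" where
  "hinv H f h = (THE h'. hg_inv H f (hident H f) h h')"

definition hypergroup :: "'a set \<Rightarrow> ('a \<Rightarrow> 'a \<Rightarrow> 'a set) \<Rightarrow> bool" where
  "hypergroup H f \<longleftrightarrow>
     H \<noteq> {} \<and>
     (\<forall>a\<in>H. \<forall>b\<in>H. f a b \<noteq> {} \<and> f a b \<subseteq> H) \<and>
     (\<forall>a\<in>H. \<forall>b\<in>H. \<forall>c\<in>H.
        hyperext f (f a b) {c} = hyperext f {a} (f b c)) \<and>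
     (\<exists>!e. hg_ident H f e) \<and>
     (\<forall>h\<in>H. \<exists>!h'. hg_inv H f (hident H f) h h') \<and>
     (\<forall>a\<in>H. \<forall>b\<in>H. \<forall>c\<in>H. c \<in> f a b \<longrightarrow>
        a \<in> f c (hinv H f b) \<and> b \<in> f (hinv H f a) c)"

definition set_equiv :: "('a \<times> 'a) set \<Rightarrow> 'a set \<Rightarrow> 'a set \<Rightarrow> bool" where
  "set_equiv r A B \<longleftrightarrow> (\<forall>a\<in>A. \<forall>b\<in>B. \<exists>b'\<in>A. \<exists>a'\<in>B. (a, a') \<in> r \<and> (b, b') \<in> r)"

definition hg_congruence :: "'a set \<Rightarrow> ('a \<Rightarrow> 'a \<Rightarrow> 'a set) \<Rightarrow> ('a \<times> 'a) set \<Rightarrow> bool" where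
  "hg_congruence H f r \<longleftrightarrow> equiv H r \<and>
     (\<forall>a x b y. (a, x) \<in> r \<longrightarrow> (b, y) \<in> r \<longrightarrow>
        set_equiv r (f a b) (f x y) \<and> set_equiv r (f b a) (f y x)) \<and>
     (\<forall>a b. (a, b) \<in> r \<longrightarrow> (hinv H f a, hinv H f b) \<in> r)"

definition quot_hyperop :: "('a \<times> 'a) set \<Rightarrow> ('a \<Rightarrow> 'a \<Rightarrow> 'a set) \<Rightarrow> 'a set \<Rightarrow> 'a set \<Rightarrow> 'a set set" where
  "quot_hyperop r f X Y = {r `` {z} | z. \<exists>x' y'. x' \<in> X \<and> y' \<in> Y \<and> z \<in> f x' y'}"

end

theory Submission
  imports Defs
begin

text \<open>Since a congruence makes \<open>x * y\<close> and \<open>x' * y'\<close> agree up to \<open>\<equiv>\<close> whenever \<open>x \<equiv> x'\<close>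
  and \<open>y \<equiv> y'\<close>, the product of two classes is simply the image of \<open>x * y\<close> under the class map,
  for any representatives \<open>x, y\<close>. Every hypergroup axiom of the quotient then follows from the
  same axiom in \<open>H\<close>: the class of the identity is the identity, the class of \<open>h\<^sup>-\<^sup>1\<close> is the
  inverse of the class of \<open>h\<close>. Only uniqueness of the inverse needs an argument: if
  \<open>[e] \<in> [y] \<boxdot> [h]\<close>, pick \<open>z \<in> y * h\<close> with \<open>z \<equiv> e\<close>; reversibility gives \<open>y \<in> z * h\<^sup>-\<^sup>1\<close>,
  which is congruent to \<open>e * h\<^sup>-\<^sup>1 = {h\<^sup>-\<^sup>1}\<close>, so \<open>y \<equiv> h\<^sup>-\<^sup>1\<close>.\<close>

locale hypergroup_on =
  fixes H :: "'a set" and f :: "'a \<Rightarrow> 'a \<Rightarrow> 'a set"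
  assumes hypergroup: "hypergroup H f"
begin

lemma hyperop_nonempty: "a \<in> H \<Longrightarrow> b \<in> H \<Longrightarrow> f a b \<noteq> {}"
  and hyperop_closed: "a \<in> H \<Longrightarrow> b \<in> H \<Longrightarrow> f a b \<subseteq> H"
  using hypergroup by (simp_all add: hypergroup_def)

lemma hyperop_assoc:
  "a \<in> H \<Longrightarrow> b \<in> H \<Longrightarrow> c \<in> H \<Longrightarrow> hyperext f (f a b) {c} = hyperext f {a} (f b c)"
  using hypergroup by (simp add: hypergroup_def)

lemma hg_ident_hident: "hg_ident H f (hident H f)"
proof -
  have "\<exists>!e. hg_ident H f e" using hypergroup by (simp add: hypergroup_def)
  then show ?thesis unfolding hident_def by (rule theI')
qed

lemma hident_in: "hident H f \<in> H"
  and hident_left: "x \<in> H \<Longrightarrow> f (hident H f) x = {x}"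
  and hident_right: "x \<in> H \<Longrightarrow> f x (hident H f) = {x}"
  using hg_ident_hident unfolding hg_ident_def by blast+

lemma hg_inv_hinv: "h \<in> H \<Longrightarrow> hg_inv H f (hident H f) h (hinv H f h)"
proof -
  assume "h \<in> H"
  then have "\<exists>!h'. hg_inv H f (hident H f) h h'" using hypergroup by (simp add: hypergroup_def)
  then show ?thesis unfolding hinv_def by (rule theI')
qed

lemma hinv_in: "h \<in> H \<Longrightarrow> hinv H f h \<in> H"
  and hident_in_hinv_left: "h \<in> H \<Longrightarrow> hident H f \<in> f (hinv H f h) h"
  and hident_in_hinv_right: "h \<in> H \<Longrightarrow> hident H f \<in> f h (hinv H f h)"
  using hg_inv_hinv unfolding hg_inv_def by blast+

lemma reversible:
  assumes "a \<in> H" "b \<in> H" "c \<in> H" "c \<in> f a b"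
  shows "a \<in> f c (hinv H f b)" and "b \<in> f (hinv H f a) c"
  using hypergroup assms unfolding hypergroup_def by blast+

end

locale hypergroup_congruence = hypergroup_on +
  fixes r :: "('a \<times> 'a) set"
  assumes congruence: "hg_congruence H f r"
begin

abbreviation cls :: "'a \<Rightarrow> 'a set" where "cls x \<equiv> r `` {x}"

abbreviation qop :: "'a set \<Rightarrow> 'a set \<Rightarrow> 'a set set" where "qop \<equiv> quot_hyperop r f"

lemma equiv_r: "equiv H r"
  using congruence by (simp add: hg_congruence_def)

lemma related_in: "(a, b) \<in> r \<Longrightarrow> a \<in> H \<and> b \<in> H"
  using equiv_type[OF equiv_r] by blast

lemma related_refl: "a \<in> H \<Longrightarrow> (a, a) \<in> r"
  using equiv_r by (simp add: equiv_def refl_on_def)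

lemma cls_eq_iff: "x \<in> H \<Longrightarrow> y \<in> H \<Longrightarrow> cls x = cls y \<longleftrightarrow> (x, y) \<in> r"
  using eq_equiv_class_iff[OF equiv_r] by blast

lemma cls_in_quotient: "x \<in> H \<Longrightarrow> cls x \<in> H // r"
  by (rule quotientI)

lemma quotient_obtain:
  assumes "X \<in> H // r"
  obtains x where "x \<in> H" "X = cls x"
  using assms by (auto elim: quotientE)

lemma hyperop_cong:
  assumes "(a, x) \<in> r" "(b, y) \<in> r" "t \<in> f x y"
  shows "\<exists>t'\<in>f a b. (t, t') \<in> r"
proof -
  have "set_equiv r (f a b) (f x y)"
    using congruence assms(1,2) by (simp add: hg_congruence_def)
  moreover obtain s where "s \<in> f a b"
    using hyperop_nonempty related_in assms(1,2) by blast
  ultimately show ?thesis using assms(3) unfolding set_equiv_def by blast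
qed

lemma qop_cls:
  assumes "x \<in> H" "y \<in> H"
  shows "qop (cls x) (cls y) = cls ` f x y"
proof
  show "qop (cls x) (cls y) \<subseteq> cls ` f x y"
  proof
    fix W assume "W \<in> qop (cls x) (cls y)"
    then obtain z x' y' where W: "W = cls z" and "(x, x') \<in> r" "(y, y') \<in> r" "z \<in> f x' y'"
      unfolding quot_hyperop_def by blast
    then obtain t where t: "t \<in> f x y" "(z, t) \<in> r" using hyperop_cong by blast
    then have "cls z = cls t" using related_in cls_eq_iff by blast
    with W t show "W \<in> cls ` f x y" by blast
  qed
  show "cls ` f x y \<subseteq> qop (cls x) (cls y)"
    using related_refl assms unfolding quot_hyperop_def by blast
qed

lemma qop_in_quotient:
  assumes "X \<in> H // r" "Y \<in> H // r"
  shows "qop X Y \<noteq> {}" and "qop X Y \<subseteq> H // r"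
proof -
  obtain x where x: "x \<in> H" "X = cls x" using assms(1) by (rule quotient_obtain)
  obtain y where y: "y \<in> H" "Y = cls y" using assms(2) by (rule quotient_obtain)
  have "qop X Y = cls ` f x y" "f x y \<noteq> {}" "f x y \<subseteq> H"
    using x y by (simp_all add: qop_cls hyperop_nonempty hyperop_closed)
  then show "qop X Y \<noteq> {}" and "qop X Y \<subseteq> H // r"
    using cls_in_quotient by (auto simp: image_subset_iff)
qed

lemma hyperext_qop_cls:
  assumes "A \<subseteq> H" "B \<subseteq> H"
  shows "hyperext qop (cls ` A) (cls ` B) = cls ` hyperext f A B"
  using assms qop_cls unfolding hyperext_def by (auto simp: subset_eq)

lemma qop_assoc:
  assumes "A \<in> H // r" "B \<in> H // r" "C \<in> H // r"
  shows "hyperext qop (qop A B) {C} = hyperext qop {A} (qop B C)"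
proof -
  obtain a b c where abc: "a \<in> H" "A = cls a" "b \<in> H" "B = cls b" "c \<in> H" "C = cls c"
    using assms by (metis quotient_obtain)
  have "hyperext qop (qop A B) {C} = hyperext qop (cls ` f a b) (cls ` {c})"
    using abc qop_cls by simp
  also have "\<dots> = cls ` hyperext f (f a b) {c}"
    using abc hyperop_closed by (intro hyperext_qop_cls) auto
  also have "\<dots> = cls ` hyperext f {a} (f b c)"
    using abc hyperop_assoc by simp
  also have "\<dots> = hyperext qop (cls ` {a}) (cls ` f b c)"
    using abc hyperop_closed by (intro hyperext_qop_cls[symmetric]) auto
  also have "\<dots> = hyperext qop {A} (qop B C)"
    using abc qop_cls by simp
  finally show ?thesis .
qed

lemma hg_ident_quotient: "hg_ident (H // r) qop (cls (hident H f))"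
  unfolding hg_ident_def
proof (intro conjI ballI)
  show "cls (hident H f) \<in> H // r" using cls_in_quotient hident_in by blast
  fix X assume "X \<in> H // r"
  then obtain x where "x \<in> H" "X = cls x" by (rule quotient_obtain)
  then show "qop (cls (hident H f)) X = {X}" and "qop X (cls (hident H f)) = {X}"
    using qop_cls hident_in hident_left hident_right by simp_all
qed

lemma hg_ident_quotient_unique:
  assumes E: "hg_ident (H // r) qop E"
  shows "E = cls (hident H f)"
proof -
  obtain x where x: "x \<in> H" "E = cls x"
    using E by (auto simp: hg_ident_def elim: quotient_obtain)
  have "qop E (cls (hident H f)) = {cls (hident H f)}"
    using E cls_in_quotient[OF hident_in] by (simp add: hg_ident_def)
  moreover have "qop E (cls (hident H f)) = {E}"
    using x qop_cls hident_in hident_right by simp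
  ultimately show ?thesis by simp
qed

lemma hident_quotient: "hident (H // r) qop = cls (hident H f)"
  unfolding hident_def[of "H // r"]
  using hg_ident_quotient hg_ident_quotient_unique by (rule the_equality)

lemma hg_inv_quotient:
  assumes "h \<in> H"
  shows "hg_inv (H // r) qop (cls (hident H f)) (cls h) (cls (hinv H f h))"
  using assms hinv_in cls_in_quotient qop_cls hident_in_hinv_left hident_in_hinv_right
  unfolding hg_inv_def by auto

lemma hg_inv_quotient_unique:
  assumes h: "h \<in> H" and Y: "hg_inv (H // r) qop (cls (hident H f)) (cls h) Y"
  shows "Y = cls (hinv H f h)"
proof -
  obtain y where y: "y \<in> H" "Y = cls y"
    using Y by (auto simp: hg_inv_def elim: quotient_obtain)
  have "cls (hident H f) \<in> cls ` f y h"
    using Y y h qop_cls unfolding hg_inv_def by auto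
  then obtain z where z: "z \<in> f y h" "cls (hident H f) = cls z" by blast
  have "z \<in> H" using z(1) y h hyperop_closed by blast
  then have "(hident H f, z) \<in> r" "y \<in> f z (hinv H f h)"
    using z cls_eq_iff hident_in reversible(1)[OF y(1) h] by auto
  then obtain t where "t \<in> f (hident H f) (hinv H f h)" "(y, t) \<in> r"
    using hyperop_cong related_refl hinv_in h by blast
  then have "(y, hinv H f h) \<in> r" using hident_left hinv_in h by auto
  then show ?thesis using y cls_eq_iff hinv_in h by auto
qed

lemma hinv_quotient: "h \<in> H \<Longrightarrow> hinv (H // r) qop (cls h) = cls (hinv H f h)"
  unfolding hinv_def[of "H // r"] hident_quotient
  using hg_inv_quotient hg_inv_quotient_unique by (rule the_equality)

lemma ex1_hg_ident_quotient: "\<exists>!E. hg_ident (H // r) qop E"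
  using hg_ident_quotient hg_ident_quotient_unique by blast

lemma ex1_hg_inv_quotient:
  assumes "X \<in> H // r"
  shows "\<exists>!Y. hg_inv (H // r) qop (hident (H // r) qop) X Y"
proof -
  obtain h where "h \<in> H" "X = cls h" using assms by (rule quotient_obtain)
  then show ?thesis
    unfolding hident_quotient using hg_inv_quotient hg_inv_quotient_unique by blast
qed

lemma qop_reversible:
  assumes "A \<in> H // r" "B \<in> H // r" "C \<in> qop A B"
  shows "A \<in> qop C (hinv (H // r) qop B)" and "B \<in> qop (hinv (H // r) qop A) C"
proof -
  obtain a b where ab: "a \<in> H" "A = cls a" "b \<in> H" "B = cls b"
    using assms(1,2) by (metis quotient_obtain)
  then obtain c where c: "c \<in> f a b" "C = cls c" using assms(3) qop_cls by auto
  have "c \<in> H" using c(1) ab hyperop_closed by blast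
  then have "a \<in> f c (hinv H f b)" "b \<in> f (hinv H f a) c"
    using reversible ab c by auto
  then show "A \<in> qop C (hinv (H // r) qop B)" and "B \<in> qop (hinv (H // r) qop A) C"
    using ab c \<open>c \<in> H\<close> hinv_quotient qop_cls hinv_in by auto
qed

end

theorem proposition4p13:
  fixes H :: "'a set" and f :: "'a \<Rightarrow> 'a \<Rightarrow> 'a set" and r :: "('a \<times> 'a) set"
  assumes "hypergroup H f" and "hg_congruence H f r"
  shows "hypergroup (H // r) (quot_hyperop r f)"
proof -
  interpret hypergroup_congruence H f r
    using assms by unfold_locales
  have "H // r \<noteq> {}"
    using cls_in_quotient[OF hident_in] by auto
  then show ?thesis
    unfolding hypergroup_def
    using qop_in_quotient qop_assoc ex1_hg_ident_quotient ex1_hg_inv_quotient qop_reversible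
    by simp
qed

end
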